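(* Let $n\ge0$, $r,s\ge1$, and suppose the variety $\mathcal V$ has $n+2$ Gumm terms and satisfies $$\alpha(\beta\circ_{2r+1}\gamma)\subseteq\alpha(\gamma\circ\beta)\circ(\alpha\gamma\circ_s\alpha\beta).$$ Then $\mathcal V$ satisfies $\alpha(\beta\circ_{4r+1}\gamma)\subseteq\alpha(\gamma\circ\beta)\circ(\alpha\gamma\circ_{s+4rn}\alpha\beta)$, and more generally, for every $q\ge1$, $$\alpha(\beta\circ_{2^qr+1}\gamma)\subseteq\alpha(\gamma\circ\beta)\circ(\alpha\gamma\circ_{s+(2^{q+1}-4)rn}\alpha\beta).$$
   Context: Here $\alpha,\beta,\gamma$ range over congruences of algebras in $\mathcal V$. $\circ$ is relational composition, juxtaposition is intersection. For relations $X,Y$ and $m\ge1$, $X\circ_m Y$ denotes $X\circ Y\circ X\circ\cdots$ with $m$ factors. A variety has $n+2$ Gumm terms if it has ternary terms $p,j_1,\dots,j_{n+1}$ satisfying: $x=j_i(x,y,x)$ for all $i$; $x=p(x,z,z)$; $p(x,x,z)=j_1(x,x,z)$; $j_i(x,z,z)=j_{i+1}(x,z,z)$ for odd $i\le n$; $j_i(x,x,z)=j_{i+1}(x,x,z)$ for even $i\le n$; $j_{n+1}(x,y,z)=z$. *)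

theory Defs
  imports Main
begin

datatype ('f, 'v) trm = Var 'v | Fn 'f "('f, 'v) trm list"

fun wf_trm :: "('f \<Rightarrow> nat) \<Rightarrow> ('f, 'v) trm \<Rightarrow> bool" where
  "wf_trm ar (Var v) = True"
| "wf_trm ar (Fn f ts) = (length ts = ar f \<and> (\<forall>t\<in>set ts. wf_trm ar t))"

fun subst :: "('v \<Rightarrow> ('f, 'w) trm) \<Rightarrow> ('f, 'v) trm \<Rightarrow> ('f, 'w) trm" where
  "subst \<sigma> (Var v) = \<sigma> v"
| "subst \<sigma> (Fn f ts) = Fn f (map (subst \<sigma>) ts)"

fun vars :: "('f, 'v) trm \<Rightarrow> 'v set" where
  "vars (Var v) = {v}"
| "vars (Fn f ts) = (\<Union>t\<in>set ts. vars t)"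

definition algebra :: "('f \<Rightarrow> nat) \<Rightarrow> 'a set \<Rightarrow> ('f \<Rightarrow> 'a list \<Rightarrow> 'a) \<Rightarrow> bool" where
  "algebra ar A ops \<longleftrightarrow>
     (\<forall>f xs. length xs = ar f \<and> set xs \<subseteq> A \<longrightarrow> ops f xs \<in> A)"

fun eval :: "('f \<Rightarrow> 'a list \<Rightarrow> 'a) \<Rightarrow> ('v \<Rightarrow> 'a) \<Rightarrow> ('f, 'v) trm \<Rightarrow> 'a" where
  "eval ops \<rho> (Var v) = \<rho> v"
| "eval ops \<rho> (Fn f ts) = ops f (map (eval ops \<rho>) ts)"

definition model ::
  "('f \<Rightarrow> nat) \<Rightarrow> (('f, nat) trm \<times> ('f, nat) trm) set \<Rightarrow> 'a set \<Rightarrow> ('f \<Rightarrow> 'a list \<Rightarrow> 'a) \<Rightarrow> bool" where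
  "model ar E A ops \<longleftrightarrow> algebra ar A ops \<and>
     (\<forall>(s, t)\<in>E. \<forall>\<rho>. (\<forall>v. \<rho> v \<in> A) \<longrightarrow> eval ops \<rho> s = eval ops \<rho> t)"

definition wf_eqs :: "('f \<Rightarrow> nat) \<Rightarrow> (('f, nat) trm \<times> ('f, nat) trm) set \<Rightarrow> bool" where
  "wf_eqs ar E \<longleftrightarrow> (\<forall>(s, t)\<in>E. wf_trm ar s \<and> wf_trm ar t)"

inductive eq_deriv ::
  "('f \<Rightarrow> nat) \<Rightarrow> (('f, nat) trm \<times> ('f, nat) trm) set \<Rightarrow> ('f, nat) trm \<Rightarrow> ('f, nat) trm \<Rightarrow> bool"
  for ar E where
  ax: "(s, t) \<in> E \<Longrightarrow> eq_deriv ar E (subst \<sigma> s) (subst \<sigma> t)"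
| refl: "eq_deriv ar E t t"
| sym: "eq_deriv ar E s t \<Longrightarrow> eq_deriv ar E t s"
| trans: "eq_deriv ar E s t \<Longrightarrow> eq_deriv ar E t u \<Longrightarrow> eq_deriv ar E s u"
| cong: "length ss = ar f \<Longrightarrow> length ts = ar f \<Longrightarrow>
         (\<forall>i<ar f. eq_deriv ar E (ss ! i) (ts ! i)) \<Longrightarrow> eq_deriv ar E (Fn f ss) (Fn f ts)"

abbreviation xv :: "('f, nat) trm" where "xv \<equiv> Var 0"
abbreviation yv :: "('f, nat) trm" where "yv \<equiv> Var 1"
abbreviation zv :: "('f, nat) trm" where "zv \<equiv> Var 2"

definition app3 :: "('f, nat) trm \<Rightarrow> ('f, nat) trm \<Rightarrow> ('f, nat) trm \<Rightarrow> ('f, nat) trm \<Rightarrow> ('f, nat) trm" where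
  "app3 t a b c = subst (\<lambda>v. if v = 0 then a else if v = 1 then b else if v = 2 then c else Var v) t"

definition ternary :: "('f \<Rightarrow> nat) \<Rightarrow> ('f, nat) trm \<Rightarrow> bool" where
  "ternary ar t \<longleftrightarrow> wf_trm ar t \<and> vars t \<subseteq> {0, 1, 2}"

(* Mod E has n+2 Gumm terms p, j_1, ..., j_{n+1}; j_i is js ! (i - 1) *)
definition has_gumm_terms :: "('f \<Rightarrow> nat) \<Rightarrow> (('f, nat) trm \<times> ('f, nat) trm) set \<Rightarrow> nat \<Rightarrow> bool" where
  "has_gumm_terms ar E n \<longleftrightarrow>
    (\<exists>p js. length js = n + 1 \<and> ternary ar p \<and> (\<forall>j\<in>set js. ternary ar j) \<and>
      (let J = (\<lambda>i. js ! (i - 1)); D = eq_deriv ar E in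
        (\<forall>i\<in>{1..n+1}. D xv (app3 (J i) xv yv xv)) \<and>
        D xv (app3 p xv zv zv) \<and>
        D (app3 p xv xv zv) (app3 (J 1) xv xv zv) \<and>
        (\<forall>i\<in>{1..n}. odd i \<longrightarrow> D (app3 (J i) xv zv zv) (app3 (J (i + 1)) xv zv zv)) \<and>
        (\<forall>i\<in>{1..n}. even i \<longrightarrow> D (app3 (J i) xv xv zv) (app3 (J (i + 1)) xv xv zv)) \<and>
        D (app3 (J (n + 1)) xv yv zv) zv))"

definition congruence :: "('f \<Rightarrow> nat) \<Rightarrow> 'a set \<Rightarrow> ('f \<Rightarrow> 'a list \<Rightarrow> 'a) \<Rightarrow> 'a rel \<Rightarrow> bool" where
  "congruence ar A ops \<theta> \<longleftrightarrow> equiv A \<theta> \<and>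
     (\<forall>f xs ys. length xs = ar f \<longrightarrow> length ys = ar f \<longrightarrow>
        (\<forall>i<ar f. (xs ! i, ys ! i) \<in> \<theta>) \<longrightarrow> (ops f xs, ops f ys) \<in> \<theta>)"

(* X \<circ>_m Y = X \<circ> Y \<circ> X \<circ> ... with m factors (m \<ge> 1) *)
fun comp_alt :: "nat \<Rightarrow> 'a rel \<Rightarrow> 'a rel \<Rightarrow> 'a rel" where
  "comp_alt 0 X Y = Id"
| "comp_alt (Suc 0) X Y = X"
| "comp_alt (Suc (Suc m)) X Y = X O comp_alt (Suc m) Y X"

definition satisfies_incl ::
  "('f \<Rightarrow> nat) \<Rightarrow> (('f, nat) trm \<times> ('f, nat) trm) set \<Rightarrow> 'a itself \<Rightarrow> nat \<Rightarrow> nat \<Rightarrow> bool" where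
  "satisfies_incl ar E _ k l \<longleftrightarrow>
    (\<forall>(A :: 'a set) ops \<alpha> \<beta> \<gamma>. model ar E A ops \<longrightarrow>
       congruence ar A ops \<alpha> \<longrightarrow> congruence ar A ops \<beta> \<longrightarrow> congruence ar A ops \<gamma> \<longrightarrow>
       \<alpha> \<inter> comp_alt k \<beta> \<gamma> \<subseteq> (\<alpha> \<inter> (\<gamma> O \<beta>)) O comp_alt l (\<alpha> \<inter> \<gamma>) (\<alpha> \<inter> \<beta>))"

end

theory Submission
  imports Defs
begin

text \<open>Let \<open>(a, c) \<in> \<alpha>\<close> with \<open>a = x\<^sub>0 \<beta> x\<^sub>1 \<gamma> \<dots> x\<^sub>4\<^sub>r\<^sub>+\<^sub>1 = c\<close> and put
  \<open>w = j\<^sub>1(a, x\<^sub>1, c)\<close>. Applying \<open>p(a, -, -)\<close> to the chain folded at \<open>x\<^sub>2\<^sub>r\<^sub>+\<^sub>1\<close> joins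
  \<open>a\<close> to \<open>w\<close> in \<open>2r + 1\<close> alternating \<open>\<beta>\<close>/\<open>\<gamma>\<close> steps, and \<open>w \<alpha> a\<close>, so the hypothesis
  applies to \<open>(a, w)\<close>. From \<open>w\<close> to \<open>c\<close> one walks through \<open>j\<^sub>i(a, x\<^sub>m, c)\<close>,
  \<open>i = 1, \<dots>, n\<close>, running the chain forwards for odd \<open>i\<close> and backwards for even \<open>i\<close>:
  all these elements lie in the \<open>\<alpha>\<close>-class of \<open>a\<close>, the Gumm identities glue consecutive
  blocks, and the last \<open>\<beta>\<close>-step of each block merges with the first of the next, which
  leaves \<open>4rn\<close> alternating \<open>\<alpha>\<gamma>\<close>/\<open>\<alpha>\<beta>\<close> steps. Iterating this doubling of \<open>r\<close>
  gives the general bound.\<close>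

section \<open>Alternating products of relations\<close>

lemma comp_alt_Suc: "comp_alt (Suc k) X Y = X O comp_alt k Y X"
  by (cases k) auto

lemma comp_alt_add:
  "comp_alt (k + l) X Y = comp_alt k X Y O (if even k then comp_alt l X Y else comp_alt l Y X)"
  by (induction k arbitrary: X Y) (simp_all add: comp_alt_Suc O_assoc)

lemma comp_alt_Suc_right: "comp_alt (Suc k) X Y = comp_alt k X Y O (if even k then X else Y)"
  using comp_alt_add[of k 1 X Y] by simp

lemma converse_comp_alt:
  assumes "sym X" "sym Y"
  shows "(comp_alt k X Y)\<inverse> = (if even k then comp_alt k Y X else comp_alt k X Y)"
  using assms
proof (induction k arbitrary: X Y)
  case 0 then show ?case by simp
next
  case (Suc k)
  have "X\<inverse> = X" using Suc.prems(1) by (simp add: sym_conv_converse_eq)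
  then have "(comp_alt (Suc k) X Y)\<inverse> = (comp_alt k Y X)\<inverse> O X"
    by (simp add: comp_alt_Suc converse_relcomp)
  also have "\<dots> = (if even (Suc k) then comp_alt (Suc k) Y X else comp_alt (Suc k) X Y)"
    using Suc.IH[of Y X] Suc.prems by (simp add: comp_alt_Suc_right)
  finally show ?case .
qed

lemma comp_alt_absorb_last:
  assumes "trans Y" "even k" "k > 0"
  shows "comp_alt k X Y O Y \<subseteq> comp_alt k X Y"
proof -
  obtain l where k: "k = Suc l" and "odd l" using assms(2,3) by (cases k) auto
  have "Y O Y \<subseteq> Y" using assms(1) by (auto dest: transD)
  then show ?thesis using \<open>odd l\<close> by (auto simp: k comp_alt_Suc_right O_assoc)
qed

lemma comp_alt_concat:
  assumes "trans X" "(u, v) \<in> comp_alt k X Y" "(v, w) \<in> comp_alt l X Y"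
    and "(w, w) \<in> X" "(w, w) \<in> Y"
  shows "(u, w) \<in> comp_alt (k + l) X Y"
proof (cases "even k")
  case True
  then show ?thesis using assms(2,3) by (auto simp: comp_alt_add)
next
  case odd: False
  show ?thesis
  proof (cases l)
    case 0
    then show ?thesis using assms(2,3) by simp
  next
    case (Suc l')
    obtain k' where k: "k = Suc k'" and "even k'" using odd by (cases k) auto
    obtain u1 where u1: "(u, u1) \<in> comp_alt k' X Y" "(u1, v) \<in> X"
      using assms(2) \<open>even k'\<close> by (auto simp: k comp_alt_Suc_right[of k'])
    obtain v1 where v1: "(v, v1) \<in> X" "(v1, w) \<in> comp_alt l' Y X"
      using assms(3) by (auto simp: Suc comp_alt_Suc)
    have "(u1, v1) \<in> X" using u1(2) v1(1) assms(1) by (auto dest: transD)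
    then have "(u1, w) \<in> comp_alt (Suc l') X Y" using v1(2) by (auto simp: comp_alt_Suc)
    then have "(u, w) \<in> comp_alt (k' + Suc l') X Y"
      unfolding comp_alt_add[of k' "Suc l'"] using u1(1) \<open>even k'\<close> by auto
    then have "(u, w) \<in> comp_alt (k + l') X Y" by (simp add: k)
    then show ?thesis using assms(4,5) by (auto simp: Suc comp_alt_Suc_right[of "k + l'"])
  qed
qed

lemma comp_alt_chain:
  assumes "even k" "l \<le> m"
    and "\<And>i. l \<le> i \<Longrightarrow> i < m \<Longrightarrow> (f i, f (Suc i)) \<in> comp_alt k X Y"
  shows "(f l, f m) \<in> comp_alt (k * (m - l)) X Y"
  using assms(2,3)
proof (induction m rule: dec_induct)
  case base then show ?case by simp
next
  case (step m)
  then have "(f l, f (Suc m)) \<in> comp_alt (k * (m - l)) X Y O comp_alt k X Y" by auto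
  moreover have "k * (Suc m - l) = k * (m - l) + k" using step.hyps(1) by (simp add: Suc_diff_le)
  ultimately show ?case using assms(1) by (simp add: comp_alt_add)
qed

lemma comp_alt_map2:
  assumes "\<And>u u' v v'. (u, u') \<in> X \<Longrightarrow> (v, v') \<in> X \<Longrightarrow> (g u v, g u' v') \<in> X'"
    and "\<And>u u' v v'. (u, u') \<in> Y \<Longrightarrow> (v, v') \<in> Y \<Longrightarrow> (g u v, g u' v') \<in> Y'"
    and "(u, u') \<in> comp_alt k X Y" "(v, v') \<in> comp_alt k X Y"
  shows "(g u v, g u' v') \<in> comp_alt k X' Y'"
  using assms
proof (induction k arbitrary: X Y X' Y' u v)
  case 0 then show ?case by simp
next
  case (Suc k)
  from Suc.prems(3,4) obtain u1 v1 where "(u, u1) \<in> X" "(u1, u') \<in> comp_alt k Y X"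
    "(v, v1) \<in> X" "(v1, v') \<in> comp_alt k Y X"
    by (auto simp: comp_alt_Suc)
  with Suc.prems(1,2) Suc.IH[where X=Y and Y=X and X'=Y' and Y'=X'] show ?case
    by (auto simp: comp_alt_Suc intro!: relcompI)
qed

lemma comp_alt_map:
  assumes "\<And>u u'. (u, u') \<in> X \<Longrightarrow> (f u, f u') \<in> X'"
    and "\<And>u u'. (u, u') \<in> Y \<Longrightarrow> (f u, f u') \<in> Y'"
    and "(u, u') \<in> comp_alt k X Y"
  shows "(f u, f u') \<in> comp_alt k X' Y'"
  using comp_alt_map2[of X "\<lambda>u v. f u" X' Y Y' u u' k u u'] assms by blast

lemma comp_alt_split_points:
  assumes "sym X" "sym Y" "r \<ge> 1" "(a, c) \<in> comp_alt (4 * r + 1) X Y"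
  obtains b m d where "(a, b) \<in> X" "(b, c) \<in> comp_alt (4 * r) Y X"
    "(m, b) \<in> comp_alt (2 * r) X Y" "(m, d) \<in> comp_alt (2 * r - 1) Y X" "(d, c) \<in> X"
    "(d, a) \<in> comp_alt (4 * r) Y X"
proof -
  obtain b where ab: "(a, b) \<in> X" and bc: "(b, c) \<in> comp_alt (2 * r + 2 * r) Y X"
    using assms(4) by (auto simp: comp_alt_Suc)
  then obtain m where bm: "(b, m) \<in> comp_alt (2 * r) Y X" and mc: "(m, c) \<in> comp_alt (2 * r) Y X"
    using comp_alt_add[of "2 * r" "2 * r" Y X] by auto
  have "2 * r = Suc (2 * r - 1)" using assms(3) by simp
  then obtain d where md: "(m, d) \<in> comp_alt (2 * r - 1) Y X" and dc: "(d, c) \<in> X"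
    using mc comp_alt_Suc_right[of "2 * r - 1" Y X] assms(3) by auto
  have "(m, b) \<in> comp_alt (2 * r) X Y"
    using bm converse_comp_alt[OF assms(2,1), of "2 * r"] by auto
  moreover have "(a, d) \<in> comp_alt (Suc (2 * r + (2 * r - 1))) X Y"
    using ab bm md by (auto simp: comp_alt_Suc comp_alt_add)
  then have "(d, a) \<in> comp_alt (4 * r) Y X"
    using converse_comp_alt[OF assms(1,2), of "4 * r"] assms(3) by (auto simp: converse_iff)
  ultimately show thesis using that ab bc md dc by simp
qed

section \<open>Gumm operations and congruences\<close>

definition compatible3 :: "'a rel \<Rightarrow> ('a \<Rightarrow> 'a \<Rightarrow> 'a \<Rightarrow> 'a) \<Rightarrow> bool" where
  "compatible3 \<theta> t \<longleftrightarrow>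
     (\<forall>u u' v v' w w'. (u, u') \<in> \<theta> \<longrightarrow> (v, v') \<in> \<theta> \<longrightarrow> (w, w') \<in> \<theta> \<longrightarrow>
        (t u v w, t u' v' w') \<in> \<theta>)"

locale gumm_operations =
  fixes A :: "'a set" and n :: nat
    and p :: "'a \<Rightarrow> 'a \<Rightarrow> 'a \<Rightarrow> 'a" and j :: "nat \<Rightarrow> 'a \<Rightarrow> 'a \<Rightarrow> 'a \<Rightarrow> 'a"
  assumes j_xyx: "\<And>i x y. i \<in> {1..n+1} \<Longrightarrow> x \<in> A \<Longrightarrow> y \<in> A \<Longrightarrow> j i x y x = x"
    and p_xzz: "\<And>x z. x \<in> A \<Longrightarrow> z \<in> A \<Longrightarrow> p x z z = x"
    and p_xxz: "\<And>x z. x \<in> A \<Longrightarrow> z \<in> A \<Longrightarrow> p x x z = j 1 x x z"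
    and j_xzz: "\<And>i x z. i \<in> {1..n} \<Longrightarrow> odd i \<Longrightarrow> x \<in> A \<Longrightarrow> z \<in> A \<Longrightarrow>
      j i x z z = j (Suc i) x z z"
    and j_xxz: "\<And>i x z. i \<in> {1..n} \<Longrightarrow> even i \<Longrightarrow> x \<in> A \<Longrightarrow> z \<in> A \<Longrightarrow>
      j i x x z = j (Suc i) x x z"
    and j_last: "\<And>x y z. x \<in> A \<Longrightarrow> y \<in> A \<Longrightarrow> z \<in> A \<Longrightarrow> j (Suc n) x y z = z"

locale gumm_congruences = gumm_operations +
  fixes \<alpha> \<beta> \<gamma> :: "'a rel"
  assumes equiv: "\<And>\<theta>. \<theta> \<in> {\<alpha>, \<beta>, \<gamma>} \<Longrightarrow> equiv A \<theta>"
    and p_compatible: "\<And>\<theta>. \<theta> \<in> {\<alpha>, \<beta>, \<gamma>} \<Longrightarrow> compatible3 \<theta> p"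
    and j_compatible: "\<And>\<theta> i. \<theta> \<in> {\<alpha>, \<beta>, \<gamma>} \<Longrightarrow> i \<in> {1..n+1} \<Longrightarrow> compatible3 \<theta> (j i)"
begin

lemma congruence_subset: "\<theta> \<in> {\<alpha>, \<beta>, \<gamma>} \<Longrightarrow> (u, v) \<in> \<theta> \<Longrightarrow> u \<in> A \<and> v \<in> A"
  using equiv by (blast dest: equiv_class_eq_iff)

lemma congruence_refl: "\<theta> \<in> {\<alpha>, \<beta>, \<gamma>} \<Longrightarrow> u \<in> A \<Longrightarrow> (u, u) \<in> \<theta>"
  using equiv by (blast dest: equivE refl_onD)

lemma congruence_sym: "\<theta> \<in> {\<alpha>, \<beta>, \<gamma>} \<Longrightarrow> sym \<theta>"
  using equiv by (blast dest: equivE)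

lemma congruence_trans: "\<theta> \<in> {\<alpha>, \<beta>, \<gamma>} \<Longrightarrow> trans \<theta>"
  using equiv by (blast dest: equivE)

lemma j_compatible_middle:
  assumes "\<theta> \<in> {\<alpha>, \<beta>, \<gamma>}" "i \<in> {1..n+1}" "a \<in> A" "c \<in> A" "(u, v) \<in> \<theta>"
  shows "(j i a u c, j i a v c) \<in> \<theta>"
  using j_compatible[OF assms(1,2)] congruence_refl[OF assms(1)] assms(3-5)
  unfolding compatible3_def by blast

lemma j_alpha_class:
  assumes "(a, c) \<in> \<alpha>" "i \<in> {1..n+1}" "y \<in> A"
  shows "(a, j i a y c) \<in> \<alpha>"
proof -
  have "a \<in> A" using assms(1) congruence_subset by blast
  have "(j i a y a, j i a y c) \<in> \<alpha>"
    using j_compatible[of \<alpha> i] assms congruence_refl[of \<alpha>] \<open>a \<in> A\<close>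
    unfolding compatible3_def by blast
  then show ?thesis using j_xyx[OF assms(2) \<open>a \<in> A\<close> assms(3)] by simp
qed

lemma j_compatible_alpha:
  assumes "(a, c) \<in> \<alpha>" "i \<in> {1..n+1}" "\<theta> \<in> {\<beta>, \<gamma>}" "(u, v) \<in> \<theta>"
  shows "(j i a u c, j i a v c) \<in> \<alpha> \<inter> \<theta>"
proof -
  have "a \<in> A" "c \<in> A" "u \<in> A" "v \<in> A"
    using assms congruence_subset by blast+
  have "(a, j i a u c) \<in> \<alpha>" "(a, j i a v c) \<in> \<alpha>"
    using j_alpha_class[OF assms(1,2)] \<open>u \<in> A\<close> \<open>v \<in> A\<close> by blast+
  then have "(j i a u c, j i a v c) \<in> \<alpha>"
    using congruence_sym[of \<alpha>] congruence_trans[of \<alpha>] by (blast dest: symD transD)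
  moreover have "(j i a u c, j i a v c) \<in> \<theta>"
    using j_compatible_middle assms(2-4) \<open>a \<in> A\<close> \<open>c \<in> A\<close> by blast
  ultimately show ?thesis by blast
qed

lemma j_comp_alt:
  assumes "(a, c) \<in> \<alpha>" "i \<in> {1..n+1}" "X \<in> {\<beta>, \<gamma>}" "Y \<in> {\<beta>, \<gamma>}"
    and "(u, v) \<in> comp_alt k X Y"
  shows "(j i a u c, j i a v c) \<in> comp_alt k (\<alpha> \<inter> X) (\<alpha> \<inter> Y)"
  by (rule comp_alt_map[OF _ _ assms(5)]) (use j_compatible_alpha assms(1-4) in blast)+

lemma j_block:
  assumes "(a, c) \<in> \<alpha>" "i \<in> {1..n}" "even k" "k > 0"
    and "(y, e) \<in> comp_alt k \<gamma> \<beta>" "(e, y') \<in> \<beta>" "j i a e c = j (Suc i) a e c"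
  shows "(j i a y c, j (Suc i) a y' c) \<in> comp_alt k (\<alpha> \<inter> \<gamma>) (\<alpha> \<inter> \<beta>)"
proof -
  have "(j i a y c, j i a e c) \<in> comp_alt k (\<alpha> \<inter> \<gamma>) (\<alpha> \<inter> \<beta>)"
    using j_comp_alt[OF assms(1) _ _ _ assms(5)] assms(2) by simp
  then have "(j i a y c, j (Suc i) a e c) \<in> comp_alt k (\<alpha> \<inter> \<gamma>) (\<alpha> \<inter> \<beta>)"
    by (simp only: assms(7))
  moreover have "(j (Suc i) a e c, j (Suc i) a y' c) \<in> \<alpha> \<inter> \<beta>"
    using j_compatible_alpha[OF assms(1) _ _ assms(6)] assms(2) by simp
  moreover have "trans (\<alpha> \<inter> \<beta>)" using congruence_trans by (simp add: trans_Int)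
  ultimately show ?thesis using comp_alt_absorb_last[OF _ assms(3,4)] by blast
qed

lemma j_chain:
  assumes "(a, c) \<in> \<alpha>" "even k" "k > 0"
    and "(a, b) \<in> \<beta>" "(b, c) \<in> comp_alt k \<gamma> \<beta>" "(c, d) \<in> \<beta>" "(d, a) \<in> comp_alt k \<gamma> \<beta>"
  shows "(j 1 a b c, c) \<in> comp_alt (k * n) (\<alpha> \<inter> \<gamma>) (\<alpha> \<inter> \<beta>)"
proof -
  have A: "a \<in> A" "b \<in> A" "c \<in> A" "d \<in> A"
    using assms(1,4,6) congruence_subset by blast+
  \<comment> \<open>from \<open>f i\<close> to \<open>f (Suc i)\<close> the chain passes through \<open>j\<^sub>i(a, c, c) = j\<^sub>i\<^sub>+\<^sub>1(a, c, c)\<close>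
    for odd \<open>i\<close> and through \<open>j\<^sub>i(a, a, c) = j\<^sub>i\<^sub>+\<^sub>1(a, a, c)\<close> for even \<open>i\<close>\<close>
  define f where "f i = j i a (if odd i then b else d) c" for i
  have "(f 1, f (Suc n)) \<in> comp_alt (k * (Suc n - 1)) (\<alpha> \<inter> \<gamma>) (\<alpha> \<inter> \<beta>)"
  proof (rule comp_alt_chain[OF assms(2)])
    fix i assume "1 \<le> i" "i < Suc n"
    then have i: "i \<in> {1..n}" by simp
    show "(f i, f (Suc i)) \<in> comp_alt k (\<alpha> \<inter> \<gamma>) (\<alpha> \<inter> \<beta>)"
    proof (cases "odd i")
      case True
      then show ?thesis
        using j_block[OF assms(1) i assms(2,3,5,6)] j_xzz[OF i True] A by (simp add: f_def)
    next
      case False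
      then show ?thesis
        using j_block[OF assms(1) i assms(2,3,7,4)] j_xxz[OF i] A by (simp add: f_def)
    qed
  qed simp
  moreover have "f (Suc n) = c" using j_last A by (simp add: f_def)
  ultimately show ?thesis by (simp add: f_def)
qed

lemma p_chain:
  assumes "even k" "m \<in> A"
    and "(a, b) \<in> \<beta>" "(m, b) \<in> comp_alt k \<beta> \<gamma>" "(m, d) \<in> comp_alt k \<beta> \<gamma>" "(d, c) \<in> \<beta>"
  shows "(a, j 1 a b c) \<in> comp_alt (Suc k) \<beta> \<gamma>"
proof -
  have A: "a \<in> A" "b \<in> A" "c \<in> A" "d \<in> A"
    using assms(3,6) congruence_subset by blast+
  have p_a: "(p a u v, p a u' v') \<in> \<theta>"
    if "\<theta> \<in> {\<alpha>, \<beta>, \<gamma>}" "(u, u') \<in> \<theta>" "(v, v') \<in> \<theta>" for \<theta> u u' v v'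
    using p_compatible[OF that(1)] congruence_refl[OF that(1) \<open>a \<in> A\<close>] that(2,3)
    unfolding compatible3_def by blast
  have "(p a m m, p a b d) \<in> comp_alt k \<beta> \<gamma>"
    by (rule comp_alt_map2[OF _ _ assms(4,5)]) (use p_a in blast)+
  moreover have "p a m m = a" using p_xzz A assms(2) by simp
  moreover have "trans \<beta>" using congruence_trans by simp
  moreover have "(p a b d, p a a c) \<in> \<beta>"
    using p_a[of \<beta>] assms(3,6) congruence_sym[of \<beta>] by (blast dest: symD)
  moreover have "p a a c = j 1 a a c" using p_xxz A by simp
  moreover have "(j 1 a a c, j 1 a b c) \<in> \<beta>"
    using j_compatible_middle[of \<beta> 1] A assms(3) by simp
  ultimately have "(a, j 1 a b c) \<in> comp_alt k \<beta> \<gamma> O \<beta>"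
    by (metis relcompI transD)
  then show ?thesis using assms(1) by (simp add: comp_alt_Suc_right)
qed

lemma doubling:
  assumes "r \<ge> 1"
    and hyp: "\<alpha> \<inter> comp_alt (2 * r + 1) \<beta> \<gamma> \<subseteq> (\<alpha> \<inter> (\<gamma> O \<beta>)) O comp_alt s (\<alpha> \<inter> \<gamma>) (\<alpha> \<inter> \<beta>)"
  shows "\<alpha> \<inter> comp_alt (4 * r + 1) \<beta> \<gamma> \<subseteq> (\<alpha> \<inter> (\<gamma> O \<beta>)) O comp_alt (s + 4 * r * n) (\<alpha> \<inter> \<gamma>) (\<alpha> \<inter> \<beta>)"
proof (rule subsetI, clarify)
  fix a c assume ac: "(a, c) \<in> \<alpha>" "(a, c) \<in> comp_alt (4 * r + 1) \<beta> \<gamma>"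
  have sym: "sym \<beta>" "sym \<gamma>" using congruence_sym by auto
  obtain b m d where ab: "(a, b) \<in> \<beta>" and bc: "(b, c) \<in> comp_alt (4 * r) \<gamma> \<beta>"
    and mb: "(m, b) \<in> comp_alt (2 * r) \<beta> \<gamma>" and md: "(m, d) \<in> comp_alt (2 * r - 1) \<gamma> \<beta>"
    and dc: "(d, c) \<in> \<beta>" and da: "(d, a) \<in> comp_alt (4 * r) \<gamma> \<beta>"
    using comp_alt_split_points[OF sym assms(1) ac(2)] .
  have "2 * r - 1 = Suc (2 * r - 2)" using assms(1) by simp
  then obtain m' where "(m, m') \<in> \<gamma>" using md by (auto simp: comp_alt_Suc)
  then have "m \<in> A" using congruence_subset[of \<gamma>] by blast
  have "2 * r = Suc (2 * r - 1)" using assms(1) by simp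
  then have md': "(m, d) \<in> comp_alt (2 * r) \<beta> \<gamma>"
    using md congruence_refl[of \<beta> m] \<open>m \<in> A\<close> by (metis comp_alt_Suc insertCI relcompI)
  define w where "w = j 1 a b c"
  have "(a, w) \<in> (\<alpha> \<inter> (\<gamma> O \<beta>)) O comp_alt s (\<alpha> \<inter> \<gamma>) (\<alpha> \<inter> \<beta>)"
  proof (rule hyp[THEN subsetD], rule IntI)
    have "b \<in> A" using ab congruence_subset by blast
    then show "(a, w) \<in> \<alpha>" using j_alpha_class[OF ac(1)] w_def by simp
    show "(a, w) \<in> comp_alt (2 * r + 1) \<beta> \<gamma>"
      using p_chain[of "2 * r" m a b d c] \<open>m \<in> A\<close> ab mb md' dc w_def by simp
  qed
  then obtain a' where a': "(a, a') \<in> \<alpha> \<inter> (\<gamma> O \<beta>)" "(a', w) \<in> comp_alt s (\<alpha> \<inter> \<gamma>) (\<alpha> \<inter> \<beta>)"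
    by blast
  have "(c, d) \<in> \<beta>" using dc sym(1) by (blast dest: symD)
  then have "(w, c) \<in> comp_alt (4 * r * n) (\<alpha> \<inter> \<gamma>) (\<alpha> \<inter> \<beta>)"
    using j_chain[OF ac(1), of "4 * r" b d] assms(1) ab bc da w_def by simp
  moreover have "c \<in> A" using dc congruence_subset by blast
  moreover have "trans (\<alpha> \<inter> \<gamma>)" using congruence_trans by (simp add: trans_Int)
  ultimately have "(a', c) \<in> comp_alt (s + 4 * r * n) (\<alpha> \<inter> \<gamma>) (\<alpha> \<inter> \<beta>)"
    using comp_alt_concat[OF _ a'(2)] congruence_refl by simp
  with a'(1) show "(a, c) \<in> (\<alpha> \<inter> (\<gamma> O \<beta>)) O comp_alt (s + 4 * r * n) (\<alpha> \<inter> \<gamma>) (\<alpha> \<inter> \<beta>)"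
    by blast
qed

end

section \<open>Soundness of equational derivations\<close>

lemma eval_subst: "eval ops \<rho> (subst \<sigma> t) = eval ops (\<lambda>v. eval ops \<rho> (\<sigma> v)) t"
  by (induction t) (auto cong: map_cong)

lemma eval_cong: "(\<forall>v\<in>vars t. \<rho> v = \<rho>' v) \<Longrightarrow> eval ops \<rho> t = eval ops \<rho>' t"
  by (induction t) (auto cong: map_cong)

lemma wf_trm_subst: "wf_trm ar t \<Longrightarrow> (\<And>v. wf_trm ar (\<sigma> v)) \<Longrightarrow> wf_trm ar (subst \<sigma> t)"
  by (induction t) auto

lemma eval_in_carrier:
  "algebra ar A ops \<Longrightarrow> wf_trm ar t \<Longrightarrow> \<forall>v\<in>vars t. \<rho> v \<in> A \<Longrightarrow> eval ops \<rho> t \<in> A"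
proof (induction t)
  case (Fn f ts)
  then have "set (map (eval ops \<rho>) ts) \<subseteq> A" by auto
  with Fn.prems show ?case by (simp add: algebra_def)
qed simp

text \<open>Derivations may pass through ill-formed terms, on which \<open>ops\<close> need not stay in \<open>A\<close>;
  the restricted operations stay in \<open>A\<close> and agree with \<open>ops\<close> on well-formed terms.\<close>

definition restrict_ops :: "('f \<Rightarrow> nat) \<Rightarrow> 'a set \<Rightarrow> 'a \<Rightarrow> ('f \<Rightarrow> 'a list \<Rightarrow> 'a) \<Rightarrow> 'f \<Rightarrow> 'a list \<Rightarrow> 'a" where
  "restrict_ops ar A a0 ops f xs = (if length xs = ar f \<and> set xs \<subseteq> A then ops f xs else a0)"

lemma eval_restrict_ops:
  assumes "algebra ar A ops" "wf_trm ar t" "\<forall>v\<in>vars t. \<rho> v \<in> A"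
  shows "eval (restrict_ops ar A a0 ops) \<rho> t = eval ops \<rho> t"
  using assms(2,3)
proof (induction t)
  case (Fn f ts)
  then have "map (eval (restrict_ops ar A a0 ops) \<rho>) ts = map (eval ops \<rho>) ts" by auto
  then have "eval (restrict_ops ar A a0 ops) \<rho> (Fn f ts) = restrict_ops ar A a0 ops f (map (eval ops \<rho>) ts)"
    by (simp only: eval.simps)
  also have "\<dots> = ops f (map (eval ops \<rho>) ts)"
    using Fn.prems by (auto simp: restrict_ops_def intro!: eval_in_carrier[OF assms(1)])
  finally show ?case by simp
qed simp

lemma eval_restrict_ops_in_carrier:
  "algebra ar A ops \<Longrightarrow> a0 \<in> A \<Longrightarrow> (\<And>v. \<rho> v \<in> A) \<Longrightarrow> eval (restrict_ops ar A a0 ops) \<rho> t \<in> A"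
  by (induction t) (auto simp: restrict_ops_def algebra_def)

lemma eq_deriv_sound_restrict_ops:
  assumes "eq_deriv ar E s t" "model ar E A ops" "wf_eqs ar E" "a0 \<in> A" "\<And>v. \<rho> v \<in> A"
  shows "eval (restrict_ops ar A a0 ops) \<rho> s = eval (restrict_ops ar A a0 ops) \<rho> t"
  using assms(1,5)
proof (induction arbitrary: \<rho> rule: eq_deriv.induct)
  case (ax s t \<sigma>)
  let ?ops = "restrict_ops ar A a0 ops"
  define \<rho>' where "\<rho>' = (\<lambda>v. eval ?ops \<rho> (\<sigma> v))"
  have alg: "algebra ar A ops" using assms(2) by (simp add: model_def)
  have \<rho>': "\<rho>' v \<in> A" for v
    unfolding \<rho>'_def using eval_restrict_ops_in_carrier[OF alg assms(4)] ax.prems by blast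
  have wf: "wf_trm ar s" "wf_trm ar t" using ax.hyps assms(3) by (auto simp: wf_eqs_def)
  have "eval ?ops \<rho> (subst \<sigma> s) = eval ops \<rho>' s"
    using eval_restrict_ops[OF alg wf(1)] \<rho>' by (simp add: eval_subst \<rho>'_def)
  also have "\<dots> = eval ops \<rho>' t" using assms(2) ax.hyps \<rho>' by (auto simp: model_def)
  also have "\<dots> = eval ?ops \<rho> (subst \<sigma> t)"
    using eval_restrict_ops[OF alg wf(2)] \<rho>' by (simp add: eval_subst \<rho>'_def)
  finally show ?case .
next
  case (cong ss f ts)
  then have "map (eval (restrict_ops ar A a0 ops) \<rho>) ss = map (eval (restrict_ops ar A a0 ops) \<rho>) ts"
    by (intro nth_equalityI) auto
  then show ?case by simp
qed simp_all

lemma eq_deriv_sound: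
  assumes "eq_deriv ar E s t" "model ar E A ops" "wf_eqs ar E" "wf_trm ar s" "wf_trm ar t"
    and "\<And>v. \<rho> v \<in> A"
  shows "eval ops \<rho> s = eval ops \<rho> t"
proof -
  have alg: "algebra ar A ops" using assms(2) by (simp add: model_def)
  let ?ops = "restrict_ops ar A (\<rho> 0) ops"
  have "eval ops \<rho> s = eval ?ops \<rho> s" using eval_restrict_ops[OF alg assms(4)] assms(6) by metis
  also have "\<dots> = eval ?ops \<rho> t" using eq_deriv_sound_restrict_ops[OF assms(1-3)] assms(6) by blast
  also have "\<dots> = eval ops \<rho> t" using eval_restrict_ops[OF alg assms(5)] assms(6) by metis
  finally show ?thesis .
qed

lemma congruence_eval:
  assumes "congruence ar A ops \<theta>" "wf_trm ar t" "\<forall>v\<in>vars t. (\<rho> v, \<rho>' v) \<in> \<theta>"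
  shows "(eval ops \<rho> t, eval ops \<rho>' t) \<in> \<theta>"
  using assms(2,3)
proof (induction t)
  case (Fn f ts)
  then have "\<forall>i<ar f. (map (eval ops \<rho>) ts ! i, map (eval ops \<rho>') ts ! i) \<in> \<theta>" by auto
  then show ?case using assms(1) Fn.prems(1) by (simp add: congruence_def)
qed simp

section \<open>Term operations of the Gumm terms\<close>

definition val3 :: "'a \<Rightarrow> 'a \<Rightarrow> 'a \<Rightarrow> nat \<Rightarrow> 'a" where
  "val3 u v w i = (if i = 0 then u else if i = 1 then v else w)"

definition term_op :: "('f \<Rightarrow> 'a list \<Rightarrow> 'a) \<Rightarrow> ('f, nat) trm \<Rightarrow> 'a \<Rightarrow> 'a \<Rightarrow> 'a \<Rightarrow> 'a" where
  "term_op ops t u v w = eval ops (val3 u v w) t"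

lemma term_op_Var [simp]: "term_op ops (Var i) u v w = val3 u v w i"
  by (simp add: term_op_def)

lemma eval_app3:
  "vars t \<subseteq> {0, 1, 2} \<Longrightarrow>
   eval ops \<rho> (app3 t (Var i) (Var j) (Var k)) = term_op ops t (\<rho> i) (\<rho> j) (\<rho> k)"
  unfolding app3_def term_op_def eval_subst by (rule eval_cong) (auto simp: val3_def)

lemma wf_trm_app3: "wf_trm ar t \<Longrightarrow> wf_trm ar (app3 t (Var i) (Var j) (Var k))"
  unfolding app3_def by (rule wf_trm_subst) auto

lemma app3_Var: "app3 (Var l) a b c = (if l = 0 then a else if l = 1 then b else if l = 2 then c else Var l)"
  by (simp add: app3_def)

lemma compatible3_term_op:
  assumes "congruence ar A ops \<theta>" "ternary ar t"
  shows "compatible3 \<theta> (term_op ops t)"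
  unfolding compatible3_def term_op_def
  using assms(2) by (auto simp: ternary_def val3_def intro!: congruence_eval[OF assms(1)])

lemma term_op_eq_deriv:
  assumes "model ar E A ops" "wf_eqs ar E" "ternary ar s" "ternary ar t"
    and "eq_deriv ar E (app3 s (Var i) (Var j) (Var k)) (app3 t (Var i') (Var j') (Var k'))"
    and "u \<in> A" "v \<in> A" "w \<in> A"
  shows "term_op ops s (val3 u v w i) (val3 u v w j) (val3 u v w k) =
    term_op ops t (val3 u v w i') (val3 u v w j') (val3 u v w k')"
proof -
  have "\<And>l. val3 u v w l \<in> A" using assms(6-8) by (simp add: val3_def)
  from eq_deriv_sound[OF assms(5,1,2) _ _ this] assms(3,4) show ?thesis
    by (simp add: ternary_def wf_trm_app3 eval_app3)
qed

lemma gumm_term_ops: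
  fixes A :: "'a set"
  assumes "model ar E A ops" "wf_eqs ar E" "has_gumm_terms ar E n"
  obtains p j where "gumm_operations A n p j"
    and "\<And>\<theta>. congruence ar A ops \<theta> \<Longrightarrow> compatible3 \<theta> p"
    and "\<And>\<theta> i. congruence ar A ops \<theta> \<Longrightarrow> i \<in> {1..n+1} \<Longrightarrow> compatible3 \<theta> (j i)"
proof -
  obtain p js where len: "length js = n + 1" and "ternary ar p" and "\<forall>t\<in>set js. ternary ar t"
    and g1: "\<forall>i\<in>{1..n+1}. eq_deriv ar E xv (app3 (js ! (i - 1)) xv yv xv)"
    and g2: "eq_deriv ar E xv (app3 p xv zv zv)"
    and g3: "eq_deriv ar E (app3 p xv xv zv) (app3 (js ! (1 - 1)) xv xv zv)"
    and g4: "\<forall>i\<in>{1..n}. odd i \<longrightarrow>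
      eq_deriv ar E (app3 (js ! (i - 1)) xv zv zv) (app3 (js ! (i + 1 - 1)) xv zv zv)"
    and g5: "\<forall>i\<in>{1..n}. even i \<longrightarrow>
      eq_deriv ar E (app3 (js ! (i - 1)) xv xv zv) (app3 (js ! (i + 1 - 1)) xv xv zv)"
    and g6: "eq_deriv ar E (app3 (js ! (n + 1 - 1)) xv yv zv) zv"
    using assms(3) unfolding has_gumm_terms_def Let_def by (elim exE conjE) (rule that, assumption+)
  define J where "J i = js ! (i - 1)" for i
  have ternary: "ternary ar p" "\<And>i. i \<in> {1..n+1} \<Longrightarrow> ternary ar (J i)"
    "ternary ar xv" "ternary ar zv"
    using \<open>ternary ar p\<close> \<open>\<forall>t\<in>set js. ternary ar t\<close> len by (auto simp: J_def ternary_def)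
  note eq = term_op_eq_deriv[OF assms(1,2)]
  have "gumm_operations A n (term_op ops p) (\<lambda>i. term_op ops (J i))"
  proof
    show "term_op ops (J i) x y x = x" if "i \<in> {1..n+1}" "x \<in> A" "y \<in> A" for i x y
      using eq[of xv "J i" 0 1 2 0 1 0 x y x, symmetric] g1[rule_format, OF that(1)] that
        ternary(2)[of i] ternary(3)
      by (simp add: J_def val3_def app3_Var)
    show "term_op ops p x z z = x" if "x \<in> A" "z \<in> A" for x z
      using eq[of xv p 0 1 2 0 2 2 x z z, symmetric] g2 that ternary(1,3)
      by (simp add: val3_def app3_Var)
    show "term_op ops p x x z = term_op ops (J 1) x x z" if "x \<in> A" "z \<in> A" for x z
      using eq[of p "J 1" 0 0 2 0 0 2 x x z] g3 that ternary(1) ternary(2)[of 1]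
      by (simp add: J_def val3_def)
    show "term_op ops (J i) x z z = term_op ops (J (Suc i)) x z z"
      if "i \<in> {1..n}" "odd i" "x \<in> A" "z \<in> A" for i x z
      using eq[of "J i" "J (Suc i)" 0 2 2 0 2 2 x z z] g4 that ternary(2)[of i] ternary(2)[of "Suc i"]
      by (simp add: J_def val3_def)
    show "term_op ops (J i) x x z = term_op ops (J (Suc i)) x x z"
      if "i \<in> {1..n}" "even i" "x \<in> A" "z \<in> A" for i x z
      using eq[of "J i" "J (Suc i)" 0 0 2 0 0 2 x x z] g5 that ternary(2)[of i] ternary(2)[of "Suc i"]
      by (simp add: J_def val3_def)
    show "term_op ops (J (Suc n)) x y z = z" if "x \<in> A" "y \<in> A" "z \<in> A" for x y z
      using eq[of "J (Suc n)" zv 0 1 2 0 1 2 x y z] g6 that ternary(2)[of "Suc n"] ternary(4)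
      by (simp add: J_def val3_def app3_Var)
  qed
  moreover have "compatible3 \<theta> (term_op ops p)" if "congruence ar A ops \<theta>" for \<theta>
    using compatible3_term_op[OF that ternary(1)] .
  moreover have "compatible3 \<theta> (term_op ops (J i))"
    if "congruence ar A ops \<theta>" "i \<in> {1..n+1}" for \<theta> i
    using compatible3_term_op[OF that(1) ternary(2)[OF that(2)]] .
  ultimately show thesis by (rule that)
qed

lemma satisfies_incl_doubling:
  assumes "wf_eqs ar E" "r \<ge> 1" "has_gumm_terms ar E n"
    and "satisfies_incl ar E TYPE('a) (2 * r + 1) s"
  shows "satisfies_incl ar E TYPE('a) (4 * r + 1) (s + 4 * r * n)"
  unfolding satisfies_incl_def
proof (intro allI impI)
  fix A :: "'a set" and ops \<alpha> \<beta> \<gamma>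
  assume model: "model ar E A ops" and cong: "congruence ar A ops \<alpha>"
    "congruence ar A ops \<beta>" "congruence ar A ops \<gamma>"
  obtain p j where "gumm_operations A n p j"
    and p: "\<And>\<theta>. congruence ar A ops \<theta> \<Longrightarrow> compatible3 \<theta> p"
    and j: "\<And>\<theta> i. congruence ar A ops \<theta> \<Longrightarrow> i \<in> {1..n+1} \<Longrightarrow> compatible3 \<theta> (j i)"
    using gumm_term_ops[OF model assms(1,3)] by blast
  have "gumm_congruences A n p j \<alpha> \<beta> \<gamma>"
  proof (rule gumm_congruences.intro[OF \<open>gumm_operations A n p j\<close>], unfold_locales)
    show "equiv A \<theta>" if "\<theta> \<in> {\<alpha>, \<beta>, \<gamma>}" for \<theta>
      using that cong by (auto simp: congruence_def)
    show "compatible3 \<theta> p" if "\<theta> \<in> {\<alpha>, \<beta>, \<gamma>}" for \<theta>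
      using that cong p by blast
    show "compatible3 \<theta> (j i)" if "\<theta> \<in> {\<alpha>, \<beta>, \<gamma>}" "i \<in> {1..n+1}" for \<theta> i
      using that cong j by blast
  qed
  then interpret gumm_congruences A n p j \<alpha> \<beta> \<gamma> .
  show "\<alpha> \<inter> comp_alt (4 * r + 1) \<beta> \<gamma> \<subseteq> (\<alpha> \<inter> (\<gamma> O \<beta>)) O comp_alt (s + 4 * r * n) (\<alpha> \<inter> \<gamma>) (\<alpha> \<inter> \<beta>)"
    using doubling[OF assms(2)] assms(4) model cong unfolding satisfies_incl_def by blast
qed

lemma satisfies_incl_iterated:
  assumes "wf_eqs ar E" "r \<ge> 1" "has_gumm_terms ar E n"
    and "satisfies_incl ar E TYPE('a) (2 * r + 1) s"
  shows "satisfies_incl ar E TYPE('a) (2 ^ Suc q * r + 1) (s + (2 ^ (q + 2) - 4) * r * n)"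
proof (induction q)
  case 0
  then show ?case using assms(4) by simp
next
  case (Suc q)
  have "2 ^ q * r \<ge> 1" using assms(2) by simp
  from satisfies_incl_doubling[OF assms(1) this assms(3)] Suc.IH
  have "satisfies_incl ar E TYPE('a) (4 * (2 ^ q * r) + 1)
      (s + (2 ^ (q + 2) - 4) * r * n + 4 * (2 ^ q * r) * n)"
    by (simp add: mult.assoc)
  moreover have "4 * (2 ^ q * r) + 1 = 2 ^ Suc (Suc q) * r + 1" by simp
  moreover have "s + (2 ^ (q + 2) - 4) * r * n + 4 * (2 ^ q * r) * n = s + (2 ^ (Suc q + 2) - 4) * r * n"
  proof -
    have "(4::nat) \<le> 2 ^ (q + 2)" by simp
    then have exp: "(2::nat) ^ (Suc q + 2) - 4 = (2 ^ (q + 2) - 4) + 4 * 2 ^ q" by simp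
    show ?thesis unfolding exp add_mult_distrib by (simp add: ac_simps)
  qed
  ultimately show ?case by metis
qed

theorem corollary4p6:
  fixes ar :: "'f \<Rightarrow> nat" and E :: "(('f, nat) trm \<times> ('f, nat) trm) set"
    and n r s :: nat
  assumes "wf_eqs ar E"
    and "r \<ge> 1" and "s \<ge> 1"
    and "has_gumm_terms ar E n"
    and "satisfies_incl ar E TYPE('a) (2 * r + 1) s"
  shows "satisfies_incl ar E TYPE('a) (4 * r + 1) (s + 4 * r * n) \<and>
    (\<forall>q \<ge> 1. satisfies_incl ar E TYPE('a) (2 ^ q * r + 1) (s + (2 ^ (q + 1) - 4) * r * n))"
proof (intro conjI allI impI)
  show "satisfies_incl ar E TYPE('a) (4 * r + 1) (s + 4 * r * n)"
    by (rule satisfies_incl_doubling[OF assms(1,2,4,5)])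
  fix q :: nat assume "q \<ge> 1"
  then obtain q' where "q = Suc q'" by (cases q) auto
  then show "satisfies_incl ar E TYPE('a) (2 ^ q * r + 1) (s + (2 ^ (q + 1) - 4) * r * n)"
    using satisfies_incl_iterated[OF assms(1,2,4,5), of q'] by simp
qed

end
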